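(* Let $d,M$ be positive integers with $M\ge 2$ and let $\mathcal{V}_J=\{v_j(\mathbf{z},\mathbf{y}_M,\dots,\mathbf{y}_1):j\in J\}$ be a family of real-valued functions on $(\mathbb{R}^d)^{M+1}$ satisfying (b1), (b4), (b5) and (b6). Then for any $r$ with $2\le r\le M$, there exists a set $\mathcal{Y}\subset(\mathbb{R}^d)^M$ of full measure such that for every set $\mathcal{Y}'\subset\mathcal{Y}$ of positive measure and every set $\mathcal{Z}_r\subset(\mathbb{R}^d)^r$ of positive measure, the product family $\otimes^r\mathcal{V}_J=\{v_{j_r}(\mathbf{z}_r,\dots,\mathbf{z}_1,\mathbf{y}_M,\dots,\mathbf{y}_r)\cdots v_{j_1}(\mathbf{z}_1,\mathbf{y}_M,\dots,\mathbf{y}_1):(j_r,\dots,j_1)\in J^r\}$ is linearly independent under finite mixtures on $(\mathbf{z}_r,\dots,\mathbf{z}_1,\mathbf{y}_M,\dots,\mathbf{y}_1)\in\mathcal{Z}_r\times\mathcal{Y}'$.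
   Context: Measures are Lebesgue; a set has full measure if its complement has measure zero. A family $\{g_\alpha\}$ is linearly independent under finite mixtures on a set $D$ if every finite subfamily is linearly independent as functions on $D$ (no nontrivial finite linear combination vanishes at every point of $D$); a family "contains linearly dependent functions" on $D$ if this fails. In the product, each factor $v_{j_\ell}(\mathbf{z}_\ell,\mathbf{z}_{\ell-1},\dots,\mathbf{z}_1,\mathbf{y}_M,\dots,\mathbf{y}_\ell)$ denotes $v_{j_\ell}$ evaluated with first argument $\mathbf{z}_\ell$ and its remaining $M$ arguments (in order) $\mathbf{z}_{\ell-1},\dots,\mathbf{z}_1,\mathbf{y}_M,\dots,\mathbf{y}_\ell$. Assumptions on $\mathcal{V}_J$: (b1) $v_j(\mathbf{z},\mathbf{y}_M,\dots,\mathbf{y}_1)>0$ for all $j\in J$ and all arguments. (b4) There exists a full-measure set $\mathcal{Y}\subset(\mathbb{R}^d)^M$ such that for all positive-measure sets $\mathcal{Y}'\subset\mathcal{Y}$ and $\mathcal{Z}\subset\mathbb{R}^d$, $\mathcal{V}_J$ is linearly independent under finite mixtures on $(\mathbf{z},\mathbf{y}_M,\dots,\mathbf{y}_1)\in\mathcal{Z}\times\mathcal{Y}'$. (b5) For any $1\le\ell\le M$, any $(\boldsymbol{\beta}_\ell,\dots,\boldsymbol{\beta}_1)\in(\mathbb{R}^d)^\ell$, any positive-measure sets $\mathcal{Z}\subset\mathbb{R}^d$, $\mathcal{Y}\subset(\mathbb{R}^d)^{M-\ell}$, and any finite $J_0\subset J$: the functions $\{v_j(\mathbf{z},\mathbf{y}_M,\dots,\mathbf{y}_{\ell+1},\boldsymbol{\beta}_\ell,\dots,\boldsymbol{\beta}_1):j\in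 J_0\}$ are linearly dependent on $(\mathbf{z},\mathbf{y}_M,\dots,\mathbf{y}_{\ell+1})\in\mathcal{Z}\times\mathcal{Y}$ only if there exist $j\ne j'\in J_0$ with $v_j(\cdot,\dots,\cdot,\boldsymbol{\beta}_\ell,\dots,\boldsymbol{\beta}_1)=v_{j'}(\cdot,\dots,\cdot,\boldsymbol{\beta}_\ell,\dots,\boldsymbol{\beta}_1)$ on all of $(\mathbb{R}^d)^{M-\ell+1}$. (b6) For every $j\in J$, $v_j(\mathbf{z},\mathbf{y}_M,\dots,\mathbf{y}_1)$ is continuous in $(\mathbf{y}_M,\dots,\mathbf{y}_1)\in(\mathbb{R}^d)^M$. *)

theory Defs
  imports "HOL-Analysis.Analysis"
begin

text \<open>Points of (R^d)^k are represented as tuples indexed by a finite index set I of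
naturals, i.e. elements of PiE I (\<lambda>_. UNIV).\<close>

definition tuple_lebesgue :: "nat set \<Rightarrow> (nat \<Rightarrow> 'a::euclidean_space) measure" where
  "tuple_lebesgue I = completion (PiM I (\<lambda>_. lborel))"

definition full_measure :: "'a measure \<Rightarrow> 'a set \<Rightarrow> bool" where
  "full_measure N Y \<longleftrightarrow> Y \<in> sets N \<and> emeasure N (space N - Y) = 0"

definition pos_measure :: "'a measure \<Rightarrow> 'a set \<Rightarrow> bool" where
  "pos_measure N S \<longleftrightarrow> S \<in> sets N \<and> emeasure N S > 0"

definition lin_indep_fm :: "'i set \<Rightarrow> ('i \<Rightarrow> 'x \<Rightarrow> real) \<Rightarrow> 'x set \<Rightarrow> bool" where
  "lin_indep_fm A g D \<longleftrightarrow>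
     (\<forall>F c. finite F \<and> F \<subseteq> A \<and> (\<forall>x\<in>D. (\<Sum>a\<in>F. c a * g a x) = 0) \<longrightarrow> (\<forall>a\<in>F. c a = 0))"

text \<open>Remaining M arguments of the l-th factor: slot i (i = 1..M; slot M is listed first)
receives, listed from slot M down to 1: z_{l-1},...,z_1, y_M,...,y_l.\<close>
definition factor_args :: "nat \<Rightarrow> nat \<Rightarrow> (nat \<Rightarrow> 'a) \<Rightarrow> (nat \<Rightarrow> 'a) \<Rightarrow> (nat \<Rightarrow> 'a)" where
  "factor_args M l zs y =
     (\<lambda>i\<in>{1..M}. if i \<le> M + 1 - l then y (i + l - 1) else zs (i - (M + 1 - l)))"

text \<open>Tuple (y_M,...,y_{l+1},beta_l,...,beta_1) as an element of PiE {1..M}.\<close>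
definition merge_tuple :: "nat \<Rightarrow> nat \<Rightarrow> (nat \<Rightarrow> 'a) \<Rightarrow> (nat \<Rightarrow> 'a) \<Rightarrow> (nat \<Rightarrow> 'a)" where
  "merge_tuple M l y \<beta> = (\<lambda>i\<in>{1..M}. if i \<le> l then \<beta> i else y i)"

definition prod_family ::
  "nat \<Rightarrow> nat \<Rightarrow> ('j \<Rightarrow> 'a \<Rightarrow> (nat \<Rightarrow> 'a) \<Rightarrow> real) \<Rightarrow> (nat \<Rightarrow> 'j) \<Rightarrow> (nat \<Rightarrow> 'a) \<times> (nat \<Rightarrow> 'a) \<Rightarrow> real" where
  "prod_family M r v js zy = (\<Prod>l\<in>{1..r}. v (js l) (fst zy l) (factor_args M l (fst zy) (snd zy)))"

end

theory Submission
  imports Defs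
begin

text \<open>
  Encode a point \<open>(z\<^sub>r, \<dots>, z\<^sub>1, y\<^sub>M, \<dots>, y\<^sub>1)\<close> as one tuple \<open>x\<close> on \<open>{1..M+r}\<close> with
  \<open>x\<^sub>i = y\<^sub>i\<close> and \<open>x\<^sub>M\<^sub>+\<^sub>l = z\<^sub>l\<close>. The remaining arguments of the \<open>l\<close>-th factor then form the
  window \<open>x\<^sub>l, \<dots>, x\<^sub>l\<^sub>+\<^sub>M\<^sub>-\<^sub>1\<close>, so the last variable \<open>z\<^sub>k\<close> of a product of \<open>k\<close> factors occurs
  only in the \<open>k\<close>-th factor, as its first argument. If a finite mixture vanishes on a set of
  positive measure, then by Fubini almost every point has a section of positive measure in \<open>z\<^sub>k\<close>;
  on that section the mixture is a combination of the functions \<open>v\<^sub>j(\<cdot>, w)\<close>, \<open>w\<close> the window of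
  the \<open>k\<close>-th factor, whose coefficients are the partial sums over the fibres of the last index.
  These vanish as soon as the single family is independent at \<open>w\<close>, and induction on \<open>k\<close> kills
  all coefficients.

  By (b5) with \<open>l = M\<close>, the single family is independent at \<open>\<beta>\<close> unless two of its members
  coincide in \<open>z\<close> at \<open>\<beta>\<close>. By (b6) such coincidence sets are closed, and by (b4) they are null,
  so for the finitely many indices involved they can be removed from the set of positive measure.
\<close>

section \<open>Linear independence under finite mixtures\<close>

lemma lin_indep_fmI:
  assumes "\<And>F c a. finite F \<Longrightarrow> F \<subseteq> A \<Longrightarrow> (\<And>x. x \<in> D \<Longrightarrow> (\<Sum>a\<in>F. c a * g a x) = 0) \<Longrightarrow>
             a \<in> F \<Longrightarrow> c a = 0"
  shows "lin_indep_fm A g D"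
  using assms unfolding lin_indep_fm_def by blast

lemma lin_indep_fmD:
  assumes "lin_indep_fm A g D" "finite F" "F \<subseteq> A"
    and "\<And>x. x \<in> D \<Longrightarrow> (\<Sum>a\<in>F. c a * g a x) = 0" "a \<in> F"
  shows "c a = 0"
  using assms unfolding lin_indep_fm_def by blast

lemma lin_indep_fm_distinct:
  assumes indep: "lin_indep_fm A g D" and "a \<in> A" "b \<in> A" "a \<noteq> b"
  shows "\<exists>x\<in>D. g a x \<noteq> g b x"
proof (rule ccontr)
  assume "\<not> (\<exists>x\<in>D. g a x \<noteq> g b x)"
  then have "(\<Sum>i\<in>{a, b}. (if i = a then 1 else -1) * g i x) = 0" if "x \<in> D" for x
    using that \<open>a \<noteq> b\<close> by auto
  from lin_indep_fmD[OF indep _ _ this, of a] \<open>a \<in> A\<close> \<open>b \<in> A\<close> show False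
    by simp
qed

lemma lin_indep_fm_vimage:
  assumes "lin_indep_fm A (\<lambda>a x. g a (\<phi> x)) S" and "\<phi> ` S \<subseteq> D"
  shows "lin_indep_fm A g D"
  using assms by (intro lin_indep_fmI) (auto elim!: lin_indep_fmD)

lemma lin_indep_fm_PiE_finite:
  assumes indep: "\<And>J0. finite J0 \<Longrightarrow> J0 \<subseteq> J \<Longrightarrow> lin_indep_fm (PiE I (\<lambda>_. J0)) g D"
    and I: "finite I"
  shows "lin_indep_fm (PiE I (\<lambda>_. J)) g D"
proof (rule lin_indep_fmI)
  fix F c a
  assume F: "finite F" "F \<subseteq> PiE I (\<lambda>_. J)"
    and sum0: "\<And>x. x \<in> D \<Longrightarrow> (\<Sum>a\<in>F. c a * g a x) = 0" and a: "a \<in> F"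
  define J0 where "J0 = (\<Union>js\<in>F. js ` I)"
  have "finite J0" "J0 \<subseteq> J"
    using F I by (auto simp: J0_def PiE_iff)
  moreover have "F \<subseteq> PiE I (\<lambda>_. J0)"
    using F(2) by (auto simp: J0_def PiE_iff)
  ultimately show "c a = 0"
    using lin_indep_fmD[OF indep F(1) _ sum0 a] by blast
qed

section \<open>Finite products of a \<open>\<sigma>\<close>-finite measure\<close>

lemma pos_measure_completionI:
  "A \<in> sets N \<Longrightarrow> 0 < emeasure N A \<Longrightarrow> pos_measure (completion N) A"
  by (simp add: pos_measure_def)

lemma pos_measure_completionE:
  assumes "pos_measure (completion N) A"
  obtains A0 where "A0 \<subseteq> A" "A0 \<in> sets N" "0 < emeasure N A0"
proof
  show "main_part N A \<subseteq> A"
    using assms main_part_null_part_Un[of A N] unfolding pos_measure_def by blast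
  show "main_part N A \<in> sets N" "0 < emeasure N (main_part N A)"
    using assms by (auto simp: pos_measure_def)
qed

lemma pos_measure_tuple_lebesgue_empty:
  "pos_measure (tuple_lebesgue {}) {\<lambda>_. undefined :: 'a::euclidean_space}"
  unfolding tuple_lebesgue_def by (intro pos_measure_completionI) (simp_all add: PiM_empty)

definition reindex_merge ::
  "'k set \<Rightarrow> ('k \<Rightarrow> 'i) \<Rightarrow> 'l set \<Rightarrow> ('l \<Rightarrow> 'i) \<Rightarrow> ('k \<Rightarrow> 'a) \<times> ('l \<Rightarrow> 'a) \<Rightarrow> 'i \<Rightarrow> 'a" where
  "reindex_merge K f L g =
     (\<lambda>(a, b). \<lambda>i\<in>f ` K \<union> g ` L. if i \<in> f ` K then a (inv_into K f i) else b (inv_into L g i))"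

lemma reindex_merge_left: "inj_on f K \<Longrightarrow> k \<in> K \<Longrightarrow> reindex_merge K f L g (a, b) (f k) = a k"
  by (simp add: reindex_merge_def)

lemma reindex_merge_right:
  "inj_on g L \<Longrightarrow> f ` K \<inter> g ` L = {} \<Longrightarrow> l \<in> L \<Longrightarrow> reindex_merge K f L g (a, b) (g l) = b l"
  by (auto simp: reindex_merge_def)

lemma measurable_reindex_merge:
  "reindex_merge K f L g
     \<in> measurable (PiM K (\<lambda>_. N) \<Otimes>\<^sub>M PiM L (\<lambda>_. N)) (PiM (f ` K \<union> g ` L) (\<lambda>_. N))"
proof (rule measurable_PiM_single')
  fix i assume i: "i \<in> f ` K \<union> g ` L"
  show "(\<lambda>p. reindex_merge K f L g p i) \<in> measurable (PiM K (\<lambda>_. N) \<Otimes>\<^sub>M PiM L (\<lambda>_. N)) N"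
  proof (cases "i \<in> f ` K")
    case True
    then have eq: "(\<lambda>p. reindex_merge K f L g p i) = (\<lambda>p. fst p (inv_into K f i))"
      by (simp add: reindex_merge_def case_prod_beta)
    show ?thesis
      unfolding eq using inv_into_into[OF True] by measurable
  next
    case False
    with i have gL: "i \<in> g ` L"
      by simp
    with False have eq: "(\<lambda>p. reindex_merge K f L g p i) = (\<lambda>p. snd p (inv_into L g i))"
      by (simp add: reindex_merge_def case_prod_beta)
    show ?thesis
      unfolding eq using inv_into_into[OF gL] by measurable
  qed
qed (auto simp: reindex_merge_def space_pair_measure space_PiM PiE_iff inv_into_into
          split: if_splits)

lemma vimage_reindex_merge_PiE:
  assumes f: "inj_on f K" and g: "inj_on g L" and disj: "f ` K \<inter> g ` L = {}"
    and A: "\<And>i. i \<in> f ` K \<union> g ` L \<Longrightarrow> A i \<subseteq> space N"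
  shows "reindex_merge K f L g -` PiE (f ` K \<union> g ` L) A \<inter> space (PiM K (\<lambda>_. N) \<Otimes>\<^sub>M PiM L (\<lambda>_. N))
         = PiE K (\<lambda>k. A (f k)) \<times> PiE L (\<lambda>l. A (g l))"
    (is "?V = _")
proof (intro set_eqI iffI)
  fix p assume p: "p \<in> ?V"
  obtain a b where ab: "p = (a, b)" "a \<in> extensional K" "b \<in> extensional L"
    using p by (cases p) (auto simp: space_pair_measure space_PiM PiE_iff)
  have mem: "reindex_merge K f L g (a, b) i \<in> A i" if "i \<in> f ` K \<union> g ` L" for i
    using p that by (auto simp: ab(1))
  have "a k \<in> A (f k)" if "k \<in> K" for k
    using mem[of "f k"] that by (simp add: reindex_merge_left[OF f that])
  moreover have "b l \<in> A (g l)" if "l \<in> L" for l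
    using mem[of "g l"] that by (simp add: reindex_merge_right[OF g disj that])
  ultimately show "p \<in> PiE K (\<lambda>k. A (f k)) \<times> PiE L (\<lambda>l. A (g l))"
    using ab by (simp add: PiE_iff)
next
  fix p assume p: "p \<in> PiE K (\<lambda>k. A (f k)) \<times> PiE L (\<lambda>l. A (g l))"
  then obtain a b where ab: "p = (a, b)" "a \<in> PiE K (\<lambda>k. A (f k))" "b \<in> PiE L (\<lambda>l. A (g l))"
    by blast
  have "a k \<in> A (f k)" "a k \<in> space N" if "k \<in> K" for k
    using ab(2) A[of "f k"] that by auto
  moreover have "b l \<in> A (g l)" "b l \<in> space N" if "l \<in> L" for l
    using ab(3) A[of "g l"] that by auto
  ultimately have "reindex_merge K f L g (a, b) i \<in> A i" if "i \<in> f ` K \<union> g ` L" for i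
    using that by (auto simp: reindex_merge_left[OF f] reindex_merge_right[OF g disj])
  moreover have "reindex_merge K f L g (a, b) \<in> extensional (f ` K \<union> g ` L)"
    by (simp add: reindex_merge_def)
  ultimately have "reindex_merge K f L g (a, b) \<in> PiE (f ` K \<union> g ` L) A"
    "a \<in> space (PiM K (\<lambda>_. N))" "b \<in> space (PiM L (\<lambda>_. N))"
    using ab(2,3) \<open>\<And>k. k \<in> K \<Longrightarrow> a k \<in> space N\<close> \<open>\<And>l. l \<in> L \<Longrightarrow> b l \<in> space N\<close>
    by (auto simp: PiE_iff space_PiM)
  then show "p \<in> ?V"
    by (simp add: ab(1) space_pair_measure)
qed

lemma distr_PiM_reindex_merge:
  assumes N: "sigma_finite_measure N" and f: "inj_on f K" and g: "inj_on g L"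
    and disj: "f ` K \<inter> g ` L = {}" and K: "finite K" and L: "finite L"
  shows "distr (PiM K (\<lambda>_. N) \<Otimes>\<^sub>M PiM L (\<lambda>_. N)) (PiM (f ` K \<union> g ` L) (\<lambda>_. N))
           (reindex_merge K f L g)
         = PiM (f ` K \<union> g ` L) (\<lambda>_. N)"
    (is "distr ?KL ?P ?\<phi> = _")
proof -
  interpret product_sigma_finite "\<lambda>_. N"
    using N by (simp add: product_sigma_finite_def)
  interpret K: finite_product_sigma_finite "\<lambda>_. N" K
    by standard (rule K)
  interpret L: finite_product_sigma_finite "\<lambda>_. N" L
    by standard (rule L)
  show ?thesis
  proof (rule PiM_eqI)
    fix A assume A: "\<And>i. i \<in> f ` K \<union> g ` L \<Longrightarrow> A i \<in> sets N"
    have AK: "PiE K (\<lambda>k. A (f k)) \<in> sets (PiM K (\<lambda>_. N))"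
      and AL: "PiE L (\<lambda>l. A (g l)) \<in> sets (PiM L (\<lambda>_. N))"
      using A K L by (auto intro!: sets_PiM_I_finite)
    have "PiE (f ` K \<union> g ` L) A \<in> sets ?P"
      using A K L by (auto intro!: sets_PiM_I_finite)
    moreover have "?\<phi> -` PiE (f ` K \<union> g ` L) A \<inter> space ?KL
        = PiE K (\<lambda>k. A (f k)) \<times> PiE L (\<lambda>l. A (g l))"
      using A sets.sets_into_space by (intro vimage_reindex_merge_PiE[OF f g disj]) blast
    ultimately have "emeasure (distr ?KL ?P ?\<phi>) (PiE (f ` K \<union> g ` L) A)
        = emeasure ?KL (PiE K (\<lambda>k. A (f k)) \<times> PiE L (\<lambda>l. A (g l)))"
      by (simp add: emeasure_distr[OF measurable_reindex_merge])
    also have "\<dots> = (\<Prod>k\<in>K. emeasure N (A (f k))) * (\<Prod>l\<in>L. emeasure N (A (g l)))"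
      using A AK AL by (simp add: L.emeasure_pair_measure_Times K.measure_times L.measure_times)
    also have "\<dots> = (\<Prod>i\<in>f ` K \<union> g ` L. emeasure N (A i))"
      using disj f g K L by (simp add: prod.union_disjoint prod.reindex)
    finally show "emeasure (distr ?KL ?P ?\<phi>) (PiE (f ` K \<union> g ` L) A)
        = (\<Prod>i\<in>f ` K \<union> g ` L. emeasure N (A i))" .
  qed (use K L in auto)
qed

lemma restrict_reindex_merge:
  assumes "inj_on f K" "inj_on g L" "f ` K \<inter> g ` L = {}" "a \<in> extensional K" "b \<in> extensional L"
  shows "(\<lambda>i\<in>K. reindex_merge K f L g (a, b) (f i)) = a"
    and "(\<lambda>i\<in>L. reindex_merge K f L g (a, b) (g i)) = b"
  using assms by (auto simp: reindex_merge_left reindex_merge_right extensional_def)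

lemma sets_PiM_reindex_pair:
  assumes B: "B \<in> sets (PiM K (\<lambda>_. N))" and C: "C \<in> sets (PiM L (\<lambda>_. N))"
  shows "{x \<in> space (PiM (f ` K \<union> g ` L) (\<lambda>_. N)). (\<lambda>i\<in>K. x (f i)) \<in> B \<and> (\<lambda>i\<in>L. x (g i)) \<in> C}
           \<in> sets (PiM (f ` K \<union> g ` L) (\<lambda>_. N))"
    (is "?S \<in> sets ?P")
proof -
  have mK: "(\<lambda>x. \<lambda>i\<in>K. x (f i)) \<in> measurable ?P (PiM K (\<lambda>_. N))"
    by (intro measurable_restrict measurable_component_singleton) auto
  have mL: "(\<lambda>x. \<lambda>i\<in>L. x (g i)) \<in> measurable ?P (PiM L (\<lambda>_. N))"
    by (intro measurable_restrict measurable_component_singleton) auto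
  have "?S = ((\<lambda>x. \<lambda>i\<in>K. x (f i)) -` B \<inter> space ?P) \<inter> ((\<lambda>x. \<lambda>i\<in>L. x (g i)) -` C \<inter> space ?P)"
    by blast
  then show ?thesis
    using measurable_sets[OF mK B] measurable_sets[OF mL C] by (simp only: sets.Int)
qed

lemma emeasure_PiM_reindex_pair:
  assumes N: "sigma_finite_measure N" and f: "inj_on f K" and g: "inj_on g L"
    and disj: "f ` K \<inter> g ` L = {}" and K: "finite K" and L: "finite L"
    and B: "B \<in> sets (PiM K (\<lambda>_. N))" and C: "C \<in> sets (PiM L (\<lambda>_. N))"
  shows "emeasure (PiM (f ` K \<union> g ` L) (\<lambda>_. N))
           {x \<in> space (PiM (f ` K \<union> g ` L) (\<lambda>_. N)). (\<lambda>i\<in>K. x (f i)) \<in> B \<and> (\<lambda>i\<in>L. x (g i)) \<in> C}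
         = emeasure (PiM K (\<lambda>_. N)) B * emeasure (PiM L (\<lambda>_. N)) C"
    (is "emeasure ?P ?S = _")
proof -
  interpret product_sigma_finite "\<lambda>_. N"
    using N by (simp add: product_sigma_finite_def)
  interpret L: finite_product_sigma_finite "\<lambda>_. N" L
    by standard (rule L)
  let ?KL = "PiM K (\<lambda>_. N) \<Otimes>\<^sub>M PiM L (\<lambda>_. N)"
  have "reindex_merge K f L g -` ?S \<inter> space ?KL = B \<times> C"
  proof (intro set_eqI iffI)
    fix p assume p: "p \<in> reindex_merge K f L g -` ?S \<inter> space ?KL"
    then obtain a b where ab: "p = (a, b)" "a \<in> extensional K" "b \<in> extensional L"
      by (auto simp: space_pair_measure space_PiM PiE_iff)
    with p show "p \<in> B \<times> C"
      using restrict_reindex_merge[OF f g disj ab(2,3)] by auto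
  next
    fix p assume p: "p \<in> B \<times> C"
    then obtain a b where ab: "p = (a, b)" "a \<in> space (PiM K (\<lambda>_. N))" "b \<in> space (PiM L (\<lambda>_. N))"
      using sets.sets_into_space[OF B] sets.sets_into_space[OF C] by blast
    then have ext: "a \<in> extensional K" "b \<in> extensional L"
      by (simp_all add: space_PiM PiE_iff)
    have "p \<in> space ?KL"
      using ab by (simp add: space_pair_measure)
    moreover from this have "reindex_merge K f L g p \<in> space ?P"
      by (rule measurable_space[OF measurable_reindex_merge])
    ultimately show "p \<in> reindex_merge K f L g -` ?S \<inter> space ?KL"
      using p ab restrict_reindex_merge[OF f g disj ext] by auto
  qed
  then show ?thesis
    using sets_PiM_reindex_pair[OF B C] B C
    by (subst distr_PiM_reindex_merge[OF N f g disj K L, symmetric])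
       (simp add: emeasure_distr[OF measurable_reindex_merge] L.emeasure_pair_measure_Times)
qed

lemma fun_upd_in_space_PiMD:
  "x(k := z) \<in> space (PiM I M) \<Longrightarrow> k \<in> I \<Longrightarrow> z \<in> space (M k)"
  by (auto simp: space_PiM PiE_iff dest: bspec[where x=k])

lemma sets_fun_upd_section:
  assumes x: "x \<in> space (PiM J M)" and I: "I = J \<union> {k}" and S: "S \<in> sets (PiM I M)"
  shows "{z. x(k := z) \<in> S} \<in> sets (M k)"
proof -
  have upd: "(\<lambda>z. x(k := z)) \<in> measurable (M k) (PiM I M)"
    using x by (intro measurable_fun_upd[OF I]) auto
  have "{z. x(k := z) \<in> S} = (\<lambda>z. x(k := z)) -` S \<inter> space (M k)"
    using sets.sets_into_space[OF S] I by (auto intro: fun_upd_in_space_PiMD)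
  then show ?thesis
    using measurable_sets[OF upd S] by simp
qed

lemma sets_PiM_positive_sections:
  assumes N: "sigma_finite_measure N" and k: "k \<in> I" and S: "S \<in> sets (PiM I (\<lambda>_. N))"
  shows "{x \<in> S. 0 < emeasure N {z. x(k := z) \<in> S}} \<in> sets (PiM I (\<lambda>_. N))"
proof -
  let ?P = "PiM I (\<lambda>_. N)"
  define Q where "Q = (\<lambda>p. (fst p)(k := snd p)) -` S \<inter> space (?P \<Otimes>\<^sub>M N)"
  have "(\<lambda>p. (fst p)(k := snd p)) \<in> measurable (?P \<Otimes>\<^sub>M N) ?P"
    by (rule measurable_fun_upd[where J=I, OF _ measurable_fst measurable_snd]) (use k in auto)
  then have "Q \<in> sets (?P \<Otimes>\<^sub>M N)"
    unfolding Q_def using S by (rule measurable_sets)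
  then have "(\<lambda>x. emeasure N (Pair x -` Q)) \<in> borel_measurable ?P"
    using N by (intro sigma_finite_measure.measurable_emeasure_Pair)
  then have "{x \<in> space ?P. 0 < emeasure N (Pair x -` Q)} \<in> sets ?P"
    by measurable
  moreover have "Pair x -` Q = {z. x(k := z) \<in> S}" if "x \<in> space ?P" for x
    using that sets.sets_into_space[OF S] k
    by (auto simp: Q_def space_pair_measure intro: fun_upd_in_space_PiMD)
  then have "{x \<in> S. 0 < emeasure N {z. x(k := z) \<in> S}}
      = S \<inter> {x \<in> space ?P. 0 < emeasure N (Pair x -` Q)}"
    using sets.sets_into_space[OF S] by auto
  ultimately show ?thesis
    using S by auto
qed

lemma null_sets_PiM_null_sections:
  assumes N: "sigma_finite_measure N" and I: "finite I" "k \<in> I" and S: "S \<in> sets (PiM I (\<lambda>_. N))"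
  shows "{x \<in> S. emeasure N {z. x(k := z) \<in> S} = 0} \<in> null_sets (PiM I (\<lambda>_. N))"
proof -
  interpret product_sigma_finite "\<lambda>_. N"
    using N by (simp add: product_sigma_finite_def)
  define T where "T = {x \<in> S. emeasure N {z. x(k := z) \<in> S} = 0}"
  have "T = S - {x \<in> S. 0 < emeasure N {z. x(k := z) \<in> S}}"
    by (auto simp: T_def)
  then have T_sets: "T \<in> sets (PiM I (\<lambda>_. N))"
    using S sets_PiM_positive_sections[OF N I(2) S] by auto
  define I0 where "I0 = I - {k}"
  have I0: "finite I0" "k \<notin> I0" "I = insert k I0"
    using I by (auto simp: I0_def)
  have fiber_null: "(\<integral>\<^sup>+ z. indicator T (x(k := z)) \<partial>N) = 0"
    if x: "x \<in> space (PiM I0 (\<lambda>_. N))" for x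
  proof -
    define Z where "Z = {z. x(k := z) \<in> S}"
    have Z: "Z \<in> sets N"
      unfolding Z_def using x I0(3) S by (intro sets_fun_upd_section) auto
    have "x(k := z) \<in> T \<longleftrightarrow> z \<in> Z \<and> emeasure N Z = 0" for z
      by (simp add: T_def Z_def)
    then have "indicator T (x(k := z)) = (if emeasure N Z = 0 then indicator Z z else 0 :: ennreal)"
      for z
      by (simp add: indicator_def)
    then show ?thesis
      using Z by (cases "emeasure N Z = 0") simp_all
  qed
  have "emeasure (PiM I (\<lambda>_. N)) T = (\<integral>\<^sup>+ x. indicator T x \<partial>PiM (insert k I0) (\<lambda>_. N))"
    using T_sets I0(3) by simp
  also have "\<dots> = (\<integral>\<^sup>+ x. (\<integral>\<^sup>+ z. indicator T (x(k := z)) \<partial>N) \<partial>PiM I0 (\<lambda>_. N))"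
    using T_sets I0 by (intro product_nn_integral_insert) auto
  also have "\<dots> = 0"
    using fiber_null by (simp cong: nn_integral_cong_simp)
  finally show ?thesis
    using T_sets by (auto simp: T_def)
qed

lemma emeasure_PiM_positive_sections:
  assumes N: "sigma_finite_measure N" and I: "finite I" "k \<in> I" and S: "S \<in> sets (PiM I (\<lambda>_. N))"
  shows "emeasure (PiM I (\<lambda>_. N)) {x \<in> S. 0 < emeasure N {z. x(k := z) \<in> S}}
         = emeasure (PiM I (\<lambda>_. N)) S"
proof -
  have "{x \<in> S. 0 < emeasure N {z. x(k := z) \<in> S}} = S - {x \<in> S. emeasure N {z. x(k := z) \<in> S} = 0}"
    by (auto simp: zero_less_iff_neq_zero)
  then show ?thesis
    using emeasure_Diff_null_set[OF null_sets_PiM_null_sections[OF N I S] S] by simp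
qed

lemma sets_PiM_openin:
  fixes U :: "('i \<Rightarrow> 'a::second_countable_topology) set"
  assumes I: "finite I" and U: "openin (product_topology (\<lambda>_. euclidean) I) U"
  shows "U \<in> sets (PiM I (\<lambda>_. borel))"
proof -
  obtain \<B> :: "'a set set" where \<B>: "countable \<B>" "topological_basis \<B>"
    using ex_countable_basis by blast
  define \<C> where "\<C> = (\<lambda>b. PiE I b) ` {b \<in> PiE I (\<lambda>_. \<B>). PiE I b \<subseteq> U}"
  have "countable \<C>"
    unfolding \<C>_def using countable_PiE[OF I, of "\<lambda>_. \<B>"] \<B>(1)
    by (auto intro: countable_image countable_subset[rotated])
  moreover have "\<C> \<subseteq> sets (PiM I (\<lambda>_. borel))"
    using topological_basis_open[OF \<B>(2)] I by (auto simp: \<C>_def PiE_iff intro!: sets_PiM_I_finite)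
  moreover have "U = \<Union>\<C>"
  proof (intro equalityI subsetI)
    fix x assume x: "x \<in> U"
    then obtain V where V: "\<forall>i\<in>I. open (V i)" "x \<in> PiE I V" "PiE I V \<subseteq> U"
      using U by (force simp: openin_product_topology_alt)
    have "\<forall>i\<in>I. \<exists>b\<in>\<B>. x i \<in> b \<and> b \<subseteq> V i"
      using V(1,2) topological_basisE[OF \<B>(2)] by (metis PiE_mem)
    then obtain b where b: "b \<in> PiE I (\<lambda>_. \<B>)" "\<forall>i\<in>I. x i \<in> b i \<and> b i \<subseteq> V i"
      by (auto simp: PiE_choice)
    have "x \<in> PiE I b" "PiE I b \<subseteq> PiE I V"
      using V(2) b(2) by (auto simp: PiE_iff)
    moreover from this(2) have "PiE I b \<in> \<C>"
      unfolding \<C>_def using b(1) V(3) by (intro imageI) auto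
    ultimately show "x \<in> \<Union>\<C>"
      by (intro UnionI)
  qed (auto simp: \<C>_def)
  ultimately show ?thesis
    by (simp add: sets.countable_Union)
qed

lemma sets_PiM_closedin:
  fixes C :: "('i \<Rightarrow> 'a::second_countable_topology) set"
  assumes I: "finite I" and C: "closedin (product_topology (\<lambda>_. euclidean) I) C"
  shows "C \<in> sets (PiM I (\<lambda>_. borel))"
proof -
  have "PiE I (\<lambda>_. UNIV) - C \<in> sets (PiM I (\<lambda>_. borel))"
    using C by (intro sets_PiM_openin[OF I]) (simp add: closedin_def)
  moreover have "C = space (PiM I (\<lambda>_. borel)) - (PiE I (\<lambda>_. UNIV) - C)"
    using closedin_subset[OF C] by (auto simp: space_PiM)
  ultimately show ?thesis
    by (metis sets.compl_sets)
qed

section \<open>Coincidence sets of the family\<close>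

lemma closedin_coincidence_set:
  assumes "Hausdorff_space Y"
    and "\<And>z. continuous_map X Y (f z)" and "\<And>z. continuous_map X Y (g z)"
  shows "closedin X {x \<in> topspace X. \<forall>z. f z x = g z x}"
proof -
  have "{x \<in> topspace X. \<forall>z. f z x = g z x} = topspace X \<inter> (\<Inter>z. {x \<in> topspace X. f z x = g z x})"
    by auto
  also have "closedin X \<dots>"
    using closedin_continuous_maps_eq[OF assms]
    by (intro closedin_Int closedin_topspace closedin_Inter) auto
  finally show ?thesis .
qed

lemma coincidence_set_null:
  assumes Y: "full_measure (completion N) Y"
    and indep: "\<And>Y'. Y' \<subseteq> Y \<Longrightarrow> pos_measure (completion N) Y' \<Longrightarrow>
                  lin_indep_fm J (\<lambda>j (z, y). v j z y) (Z \<times> Y')"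
    and B: "B \<in> sets N" and j: "j \<in> J" "j' \<in> J" "j \<noteq> j'"
    and coincide: "\<And>z y. z \<in> Z \<Longrightarrow> y \<in> B \<Longrightarrow> v j z y = v j' z y"
  shows "B \<in> null_sets N"
proof (rule ccontr)
  assume "B \<notin> null_sets N"
  then have B_pos: "0 < emeasure N B"
    using B by (auto simp: zero_less_iff_neq_zero intro: null_setsI)
  have Y_sets: "Y \<in> sets (completion N)" and "space N - Y \<in> null_sets (completion N)"
    using Y by (auto simp: full_measure_def null_sets_def)
  then have "emeasure (completion N) (B - (space N - Y)) = emeasure (completion N) B"
    using B by (intro emeasure_Diff_null_set) auto
  moreover have "B - (space N - Y) = B \<inter> Y"
    using sets.sets_into_space[OF B] by blast
  ultimately have "pos_measure (completion N) (B \<inter> Y)"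
    using B B_pos Y_sets by (auto simp: pos_measure_def)
  then have "lin_indep_fm J (\<lambda>j (z, y). v j z y) (Z \<times> (B \<inter> Y))"
    by (intro indep) auto
  from lin_indep_fm_distinct[OF this j] show False
    using coincide by auto
qed

lemma coincidence_sets_null:
  fixes v :: "'j \<Rightarrow> 'a::euclidean_space \<Rightarrow> (nat \<Rightarrow> 'a) \<Rightarrow> real"
  assumes Y: "full_measure (tuple_lebesgue I) Y"
    and indep: "\<And>Y'. Y' \<subseteq> Y \<Longrightarrow> pos_measure (tuple_lebesgue I) Y' \<Longrightarrow>
                  lin_indep_fm J (\<lambda>j (z, y). v j z y) (UNIV \<times> Y')"
    and cont: "\<And>j z. j \<in> J \<Longrightarrow> continuous_map (product_topology (\<lambda>_. euclidean) I) euclidean (v j z)"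
    and I: "finite I" and J0: "finite J0" "J0 \<subseteq> J"
  shows "(\<Union>j\<in>J0. \<Union>j'\<in>J0 - {j}. {\<beta> \<in> PiE I (\<lambda>_. UNIV). \<forall>z. v j z \<beta> = v j' z \<beta>})
           \<in> null_sets (PiM I (\<lambda>_. lborel))"
proof -
  define B where "B j j' = {\<beta> \<in> PiE I (\<lambda>_. UNIV). \<forall>z. v j z \<beta> = v j' z \<beta>}" for j j'
  have "B j j' \<in> null_sets (PiM I (\<lambda>_. lborel))" if "j \<in> J0" "j' \<in> J0" "j \<noteq> j'" for j j'
  proof (rule coincidence_set_null[where j=j and j'=j'])
    show "full_measure (completion (PiM I (\<lambda>_. lborel))) Y"
      using Y by (simp add: tuple_lebesgue_def)
    show "lin_indep_fm J (\<lambda>j (z, y). v j z y) (UNIV \<times> Y')"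
      if "Y' \<subseteq> Y" "pos_measure (completion (PiM I (\<lambda>_. lborel))) Y'" for Y'
      using that by (intro indep) (simp_all add: tuple_lebesgue_def)
    have "closedin (product_topology (\<lambda>_. euclidean) I)
        {\<beta> \<in> topspace (product_topology (\<lambda>_. euclidean) I). \<forall>z. v j z \<beta> = v j' z \<beta>}"
      using that J0 by (intro closedin_coincidence_set[OF Hausdorff_space_euclidean] cont) auto
    then have "closedin (product_topology (\<lambda>_. euclidean) I) (B j j')"
      by (simp add: B_def)
    then show "B j j' \<in> sets (PiM I (\<lambda>_. lborel))"
      using sets_PiM_closedin[OF I] by (simp add: sets_PiM_cong[OF refl sets_lborel])
  qed (use that J0 in \<open>auto simp: B_def\<close>)
  then show ?thesis
    using J0(1) unfolding B_def by (intro null_sets_UN' countable_finite) auto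
qed

lemma lin_indep_fm_off_coincidence_sets:
  fixes v :: "'j \<Rightarrow> 'a::euclidean_space \<Rightarrow> (nat \<Rightarrow> 'a) \<Rightarrow> real"
  assumes b5: "\<And>l \<beta> Z Y J0. 1 \<le> l \<Longrightarrow> l \<le> M \<Longrightarrow> \<beta> \<in> PiE {1..l} (\<lambda>_. UNIV) \<Longrightarrow>
               pos_measure lebesgue Z \<Longrightarrow> pos_measure (tuple_lebesgue {l+1..M}) Y \<Longrightarrow>
               finite J0 \<Longrightarrow> J0 \<subseteq> J \<Longrightarrow>
               \<not> lin_indep_fm J0 (\<lambda>j (z, y). v j z (merge_tuple M l y \<beta>)) (Z \<times> Y) \<Longrightarrow>
               \<exists>j\<in>J0. \<exists>j'\<in>J0. j \<noteq> j' \<and>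
                  (\<forall>z. \<forall>y\<in>PiE {l+1..M} (\<lambda>_. UNIV).
                      v j z (merge_tuple M l y \<beta>) = v j' z (merge_tuple M l y \<beta>))"
    and M: "1 \<le> M" and J0: "J0 \<subseteq> J"
    and \<beta>: "\<beta> \<in> space (PiM {1..M} (\<lambda>_. lborel))"
      "\<beta> \<notin> (\<Union>j\<in>J0. \<Union>j'\<in>J0 - {j}. {\<beta> \<in> PiE {1..M} (\<lambda>_. UNIV). \<forall>z. v j z \<beta> = v j' z \<beta>})"
    and Z: "Z \<in> sets lborel" "0 < emeasure lborel Z"
  shows "lin_indep_fm J0 (\<lambda>j z. v j z \<beta>) Z"
proof (rule lin_indep_fmI)
  fix F c a
  assume F: "finite F" "F \<subseteq> J0" and a: "a \<in> F"
    and sum0: "\<And>z. z \<in> Z \<Longrightarrow> (\<Sum>j\<in>F. c j * v j z \<beta>) = 0"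
  have \<beta>_PiE: "\<beta> \<in> PiE {1..M} (\<lambda>_. UNIV)"
    using \<beta>(1) by (simp add: space_PiM)
  then have merge: "merge_tuple M M y \<beta> = \<beta>" for y :: "nat \<Rightarrow> 'a"
    by (auto simp: merge_tuple_def PiE_iff extensional_def)
  have "lin_indep_fm F (\<lambda>j (z, y). v j z (merge_tuple M M y \<beta>)) (Z \<times> {\<lambda>_. undefined})"
  proof (rule ccontr)
    assume "\<not> ?thesis"
    from b5[OF M order_refl \<beta>_PiE pos_measure_completionI[OF Z] _ F(1) _ this] F(2) J0
    obtain j j' where "j \<in> J0" "j' \<in> J0" "j \<noteq> j'" "\<forall>z. v j z \<beta> = v j' z \<beta>"
      using pos_measure_tuple_lebesgue_empty by (auto simp: merge)
    with \<beta>(2) \<beta>_PiE show False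
      by blast
  qed
  then show "c a = 0"
    by (rule lin_indep_fmD[OF _ F(1) order_refl _ a]) (auto simp: merge sum0)
qed

section \<open>Sliding windows\<close>

definition window :: "nat \<Rightarrow> nat \<Rightarrow> (nat \<Rightarrow> 'a) \<Rightarrow> nat \<Rightarrow> 'a" where
  "window M l x = (\<lambda>i\<in>{1..M}. x (i + l - 1))"

definition window_prod ::
  "nat \<Rightarrow> ('j \<Rightarrow> 'a \<Rightarrow> (nat \<Rightarrow> 'a) \<Rightarrow> real) \<Rightarrow> nat \<Rightarrow> (nat \<Rightarrow> 'j) \<Rightarrow> (nat \<Rightarrow> 'a) \<Rightarrow> real" where
  "window_prod M v k js x = (\<Prod>l\<in>{1..k}. v (js l) (x (M + l)) (window M l x))"

lemma window_fun_upd: "l \<le> Suc k \<Longrightarrow> window M l (x(Suc (M + k) := z)) = window M l x"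
  unfolding window_def by (intro restrict_ext) auto

lemma window_prod_fun_upd:
  "window_prod M v (Suc k) js (x(Suc (M + k) := z))
     = window_prod M v k js x * v (js (Suc k)) z (window M (Suc k) x)"
proof -
  have "(\<Prod>l\<in>{1..k}. v (js l) ((x(Suc (M + k) := z)) (M + l)) (window M l (x(Suc (M + k) := z))))
      = window_prod M v k js x"
    unfolding window_prod_def by (intro prod.cong) (auto simp: window_fun_upd)
  then show ?thesis
    by (simp add: window_prod_def atLeastAtMostSuc_conv window_fun_upd)
qed

lemma window_prod_restrict: "window_prod M v k (restrict js {1..k}) = window_prod M v k js"
  unfolding window_prod_def by (intro ext prod.cong) auto

lemma sum_window_prod_fun_upd:
  assumes "finite F"
  shows "(\<Sum>js\<in>F. c js * window_prod M v (Suc k) js (x(Suc (M + k) := z)))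
       = (\<Sum>j\<in>(\<lambda>js. js (Suc k)) ` F.
            (\<Sum>js\<in>{js \<in> F. js (Suc k) = j}. c js * window_prod M v k js x)
            * v j z (window M (Suc k) x))"
proof -
  have "(\<Sum>js\<in>F. c js * window_prod M v (Suc k) js (x(Suc (M + k) := z)))
      = (\<Sum>js\<in>F. c js * window_prod M v k js x * v (js (Suc k)) z (window M (Suc k) x))"
    by (simp add: window_prod_fun_upd mult.assoc)
  also have "\<dots> = (\<Sum>j\<in>(\<lambda>js. js (Suc k)) ` F. \<Sum>js\<in>{js \<in> F. js (Suc k) = j}.
      c js * window_prod M v k js x * v (js (Suc k)) z (window M (Suc k) x))"
    using assms by (intro sum.group[symmetric]) auto
  finally show ?thesis
    by (simp add: sum_distrib_right)
qed

lemma sum_restrict_fiber: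
  assumes "G \<subseteq> PiE {1..Suc k} A" and "\<And>js. js \<in> G \<Longrightarrow> js (Suc k) = j"
  shows "(\<Sum>js'\<in>(\<lambda>js. restrict js {1..k}) ` G. f (js'(Suc k := j)) js')
         = (\<Sum>js\<in>G. f js (restrict js {1..k}))"
proof -
  have inv: "(restrict js {1..k})(Suc k := j) = js" if "js \<in> G" for js
    using assms that by (force simp: fun_eq_iff PiE_iff extensional_def)
  then have "inj_on (\<lambda>js. restrict js {1..k}) G"
    by (rule inj_on_inverseI[where g="\<lambda>js'. js'(Suc k := j)"])
  then show ?thesis
    by (rule sum.reindex_cong[OF _ refl]) (simp only: inv)
qed

lemma lin_indep_fm_PiE_Suc_coeff_eq_0:
  assumes indep: "lin_indep_fm (PiE {1..k} (\<lambda>_. J)) h D"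
    and F: "finite F" "F \<subseteq> PiE {1..Suc k} (\<lambda>_. J)"
    and fiber0: "\<And>j x. x \<in> D \<Longrightarrow> (\<Sum>js\<in>{js \<in> F. js (Suc k) = j}. c js * h (restrict js {1..k}) x) = 0"
    and a: "a \<in> F"
  shows "c a = 0"
proof -
  define G where "G = {js \<in> F. js (Suc k) = a (Suc k)}"
  have vanish: "(\<Sum>js'\<in>(\<lambda>js. restrict js {1..k}) ` G. c (js'(Suc k := a (Suc k))) * h js' x) = 0"
    if "x \<in> D" for x
  proof -
    have "(\<Sum>js'\<in>(\<lambda>js. restrict js {1..k}) ` G. c (js'(Suc k := a (Suc k))) * h js' x)
        = (\<Sum>js\<in>G. c js * h (restrict js {1..k}) x)"
      using F(2) by (intro sum_restrict_fiber) (auto simp: G_def)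
    then show ?thesis
      using fiber0[OF that, of "a (Suc k)"] by (simp add: G_def)
  qed
  have mem: "restrict a {1..k} \<in> (\<lambda>js. restrict js {1..k}) ` G"
    using a by (auto simp: G_def)
  have sub: "(\<lambda>js. restrict js {1..k}) ` G \<subseteq> PiE {1..k} (\<lambda>_. J)"
    using F(2) by (auto simp: G_def PiE_iff)
  have "c ((restrict a {1..k})(Suc k := a (Suc k))) = 0"
    using lin_indep_fmD[OF indep _ sub vanish mem] F(1) by (simp add: G_def)
  moreover have "(restrict a {1..k})(Suc k := a (Suc k)) = a"
    using a F(2) by (force simp: fun_eq_iff PiE_iff extensional_def)
  ultimately show ?thesis
    by simp
qed

lemma window_prod_fiber_sum_eq_0:
  assumes I: "Suc (M + k) \<in> I" and S: "S \<in> sets (PiM I (\<lambda>_. N))" and x: "x \<in> S"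
    and section_pos: "0 < emeasure N {z. x(Suc (M + k) := z) \<in> S}"
    and indep: "\<And>Z. Z \<in> sets N \<Longrightarrow> 0 < emeasure N Z \<Longrightarrow>
                  lin_indep_fm J (\<lambda>j z. v j z (window M (Suc k) x)) Z"
    and F: "finite F" "F \<subseteq> PiE {1..Suc k} (\<lambda>_. J)"
    and sum0: "\<And>x. x \<in> S \<Longrightarrow> (\<Sum>js\<in>F. c js * window_prod M v (Suc k) js x) = 0"
  shows "(\<Sum>js\<in>{js \<in> F. js (Suc k) = j}. c js * window_prod M v k js x) = 0"
proof (cases "j \<in> (\<lambda>js. js (Suc k)) ` F")
  case True
  define Z where "Z = {z. x(Suc (M + k) := z) \<in> S}"
  have "x \<in> space (PiM I (\<lambda>_. N))"
    using x sets.sets_into_space[OF S] by blast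
  then have Z: "Z \<in> sets N"
    unfolding Z_def using I S by (intro sets_fun_upd_section[where J=I]) auto
  have "(\<lambda>js. js (Suc k)) ` F \<subseteq> J"
    using F(2) by (auto simp: PiE_iff)
  moreover have "(\<Sum>j\<in>(\<lambda>js. js (Suc k)) ` F.
      (\<Sum>js\<in>{js \<in> F. js (Suc k) = j}. c js * window_prod M v k js x)
      * v j z (window M (Suc k) x)) = 0"
    if "z \<in> Z" for z
    using sum0[of "x(Suc (M + k) := z)"] that F(1) by (simp add: Z_def sum_window_prod_fun_upd)
  ultimately show ?thesis
    using indep[OF Z section_pos[folded Z_def]] F(1) True by (elim lin_indep_fmD) auto
next
  case False
  then have "{js \<in> F. js (Suc k) = j} = {}"
    by auto
  then show ?thesis
    by (metis sum.empty)
qed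

lemma lin_indep_fm_window_prod:
  assumes N: "sigma_finite_measure N" and I: "finite I"
  shows "{M+1..M+k} \<subseteq> I \<Longrightarrow> S \<in> sets (PiM I (\<lambda>_. N)) \<Longrightarrow> 0 < emeasure (PiM I (\<lambda>_. N)) S \<Longrightarrow>
    (\<And>x l Z. x \<in> S \<Longrightarrow> l \<in> {1..k} \<Longrightarrow> Z \<in> sets N \<Longrightarrow> 0 < emeasure N Z \<Longrightarrow>
       lin_indep_fm J (\<lambda>j z. v j z (window M l x)) Z) \<Longrightarrow>
    lin_indep_fm (PiE {1..k} (\<lambda>_. J)) (window_prod M v k) S"
proof (induction k arbitrary: S)
  case 0
  then obtain x where x: "x \<in> S"
    by (metis all_not_in_conv emeasure_empty less_irrefl)
  show ?case
  proof (rule lin_indep_fmI)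
    fix F c a
    assume "F \<subseteq> PiE {1..0} (\<lambda>_. J)" "a \<in> F"
      and sum0: "\<And>x. x \<in> S \<Longrightarrow> (\<Sum>js\<in>F. c js * window_prod M v 0 js x) = 0"
    then have "F = {a}"
      by auto
    then show "c a = 0"
      using sum0[OF x] by (simp add: window_prod_def)
  qed
next
  case (Suc k)
  have m: "Suc (M + k) \<in> I"
    using Suc.prems(1) by auto
  define S' where "S' = {x \<in> S. 0 < emeasure N {z. x(Suc (M + k) := z) \<in> S}}"
  have "S' \<in> sets (PiM I (\<lambda>_. N))" "0 < emeasure (PiM I (\<lambda>_. N)) S'"
    unfolding S'_def using Suc.prems(3)
    by (simp_all add: sets_PiM_positive_sections[OF N m Suc.prems(2)]
                      emeasure_PiM_positive_sections[OF N I m Suc.prems(2)])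
  then have indep: "lin_indep_fm (PiE {1..k} (\<lambda>_. J)) (window_prod M v k) S'"
    using Suc.prems(1,4) by (intro Suc.IH) (auto simp: S'_def)
  show ?case
  proof (rule lin_indep_fmI)
    fix F c a
    assume F: "finite F" "F \<subseteq> PiE {1..Suc k} (\<lambda>_. J)" and a: "a \<in> F"
      and sum0: "\<And>x. x \<in> S \<Longrightarrow> (\<Sum>js\<in>F. c js * window_prod M v (Suc k) js x) = 0"
    show "c a = 0"
    proof (rule lin_indep_fm_PiE_Suc_coeff_eq_0[OF indep F _ a])
      fix j x assume "x \<in> S'"
      then show "(\<Sum>js\<in>{js \<in> F. js (Suc k) = j}.
          c js * window_prod M v k (restrict js {1..k}) x) = 0"
        unfolding window_prod_restrict using F sum0 Suc.prems(4)
        by (intro window_prod_fiber_sum_eq_0[OF m Suc.prems(2)]) (auto simp: S'_def)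
    qed
  qed
qed

lemma prod_family_eq_window_prod:
  assumes "r \<le> Suc M"
  shows "prod_family M r v js ((\<lambda>l\<in>{1..r}. x (M + l)), restrict x {1..M}) = window_prod M v r js x"
proof -
  have "factor_args M l (\<lambda>l\<in>{1..r}. x (M + l)) (restrict x {1..M}) = window M l x"
    if "l \<in> {1..r}" for l
    unfolding factor_args_def window_def using that assms by (intro restrict_ext) auto
  then show ?thesis
    unfolding prod_family_def window_prod_def by (intro prod.cong) auto
qed

lemma window_in_space_PiM:
  assumes x: "x \<in> space (PiM {1..M+r} (\<lambda>_. N))" and l: "l \<in> {1..r}"
  shows "window M l x \<in> space (PiM {1..M} (\<lambda>_. N))"
proof -
  have "x (i + l - 1) \<in> space N" if "i \<in> {1..M}" for i
  proof -
    have "i + l - 1 \<in> {1..M+r}"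
      using that l by auto
    then show ?thesis
      using x by (auto simp: space_PiM)
  qed
  then show ?thesis
    by (simp add: window_def space_PiM)
qed

lemma null_sets_window_vimage:
  assumes N: "sigma_finite_measure N" and l: "l \<in> {1..r}"
    and Bad: "Bad \<in> null_sets (PiM {1..M} (\<lambda>_. N))"
  shows "{x \<in> space (PiM {1..M+r} (\<lambda>_. N)). window M l x \<in> Bad} \<in> null_sets (PiM {1..M+r} (\<lambda>_. N))"
proof -
  define W where "W = (\<lambda>i. i + l - 1) ` {1..M}"
  define V where "V = {1..M+r} - W"
  have WV: "W \<union> (\<lambda>i. i) ` V = {1..M+r}" "W \<inter> (\<lambda>i. i) ` V = {}"
    using l by (auto simp: W_def V_def)
  have inj: "inj_on (\<lambda>i. i + l - 1) {1..M}"
    using l by (auto simp: inj_on_def)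
  have Bad_sets: "Bad \<in> sets (PiM {1..M} (\<lambda>_. N))"
    using Bad by auto
  have "{x \<in> space (PiM {1..M+r} (\<lambda>_. N)). window M l x \<in> Bad}
      = {x \<in> space (PiM (W \<union> (\<lambda>i. i) ` V) (\<lambda>_. N)).
           (\<lambda>i\<in>{1..M}. x (i + l - 1)) \<in> Bad \<and> (\<lambda>i\<in>V. x i) \<in> space (PiM V (\<lambda>_. N))}"
    unfolding WV window_def by (auto simp: space_PiM PiE_iff V_def)
  also have "\<dots> \<in> null_sets (PiM (W \<union> (\<lambda>i. i) ` V) (\<lambda>_. N))"
    using sets_PiM_reindex_pair[OF Bad_sets sets.top]
      emeasure_PiM_reindex_pair[OF N inj _ WV(2)[unfolded W_def] _ _ Bad_sets sets.top] Bad
    by (auto simp: W_def V_def null_sets_def)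
  finally show ?thesis
    unfolding WV .
qed

lemma positive_set_avoiding_windows:
  assumes N: "sigma_finite_measure N"
    and Y: "Y \<in> sets (PiM {1..M} (\<lambda>_. N))" "0 < emeasure (PiM {1..M} (\<lambda>_. N)) Y"
    and Z: "Z \<in> sets (PiM {1..r} (\<lambda>_. N))" "0 < emeasure (PiM {1..r} (\<lambda>_. N)) Z"
    and Bad: "Bad \<in> null_sets (PiM {1..M} (\<lambda>_. N))"
  obtains S where "S \<in> sets (PiM {1..M+r} (\<lambda>_. N))" "0 < emeasure (PiM {1..M+r} (\<lambda>_. N)) S"
    and "\<And>x. x \<in> S \<Longrightarrow> ((\<lambda>l\<in>{1..r}. x (M + l)), restrict x {1..M}) \<in> Z \<times> Y"
    and "\<And>x l. x \<in> S \<Longrightarrow> l \<in> {1..r} \<Longrightarrow> window M l x \<notin> Bad"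
proof
  let ?P = "PiM {1..M+r} (\<lambda>_. N)"
  define A where "A = {x \<in> space ?P.
                        (\<lambda>i\<in>{1..M}. x i) \<in> Y \<and> (\<lambda>i\<in>{1..r}. x (M + i)) \<in> Z}"
  define Bad_windows where "Bad_windows = (\<Union>l\<in>{1..r}. {x \<in> space ?P. window M l x \<in> Bad})"
  have U: "(\<lambda>i. i) ` {1..M} \<union> (\<lambda>i. M + i) ` {1..r} = {1..M+r}"
    by (auto simp: image_iff intro: bexI[where x="_ - M"])
  have "A \<in> sets ?P"
    unfolding A_def U[symmetric] using Y(1) Z(1) by (intro sets_PiM_reindex_pair) auto
  moreover have "emeasure ?P A = emeasure (PiM {1..M} (\<lambda>_. N)) Y * emeasure (PiM {1..r} (\<lambda>_. N)) Z"
    unfolding A_def U[symmetric] using Y(1) Z(1) by (intro emeasure_PiM_reindex_pair[OF N]) auto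
  ultimately have A: "A \<in> sets ?P" "0 < emeasure ?P A"
    using Y(2) Z(2) by (simp_all add: ennreal_zero_less_mult_iff)
  have "Bad_windows \<in> null_sets ?P"
    unfolding Bad_windows_def using null_sets_window_vimage[OF N _ Bad]
    by (intro null_sets_UN') auto
  then show "A - Bad_windows \<in> sets ?P" "0 < emeasure ?P (A - Bad_windows)"
    using A by (auto simp: emeasure_Diff_null_set)
  show "((\<lambda>l\<in>{1..r}. x (M + l)), restrict x {1..M}) \<in> Z \<times> Y" if "x \<in> A - Bad_windows" for x
    using that by (simp add: A_def)
  show "window M l x \<notin> Bad" if "x \<in> A - Bad_windows" "l \<in> {1..r}" for x l
    using that by (auto simp: A_def Bad_windows_def)
qed

lemma lin_indep_fm_prod_family:
  assumes N: "sigma_finite_measure N" and r: "r \<le> Suc M"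
    and Bad: "Bad \<in> null_sets (PiM {1..M} (\<lambda>_. N))"
    and indep: "\<And>\<beta> Z. \<beta> \<in> space (PiM {1..M} (\<lambda>_. N)) \<Longrightarrow> \<beta> \<notin> Bad \<Longrightarrow> Z \<in> sets N \<Longrightarrow> 0 < emeasure N Z \<Longrightarrow>
                  lin_indep_fm J (\<lambda>j z. v j z \<beta>) Z"
    and Y: "pos_measure (completion (PiM {1..M} (\<lambda>_. N))) Y"
    and Z: "pos_measure (completion (PiM {1..r} (\<lambda>_. N))) Z"
  shows "lin_indep_fm (PiE {1..r} (\<lambda>_. J)) (prod_family M r v) (Z \<times> Y)"
proof -
  obtain Y0 where Y0: "Y0 \<subseteq> Y" "Y0 \<in> sets (PiM {1..M} (\<lambda>_. N))"
    "0 < emeasure (PiM {1..M} (\<lambda>_. N)) Y0"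
    using Y by (rule pos_measure_completionE)
  obtain Z0 where Z0: "Z0 \<subseteq> Z" "Z0 \<in> sets (PiM {1..r} (\<lambda>_. N))"
    "0 < emeasure (PiM {1..r} (\<lambda>_. N)) Z0"
    using Z by (rule pos_measure_completionE)
  obtain S where S: "S \<in> sets (PiM {1..M+r} (\<lambda>_. N))" "0 < emeasure (PiM {1..M+r} (\<lambda>_. N)) S"
    and S_sub: "\<And>x. x \<in> S \<Longrightarrow> ((\<lambda>l\<in>{1..r}. x (M + l)), restrict x {1..M}) \<in> Z0 \<times> Y0"
    and S_good: "\<And>x l. x \<in> S \<Longrightarrow> l \<in> {1..r} \<Longrightarrow> window M l x \<notin> Bad"
    using positive_set_avoiding_windows[OF N Y0(2,3) Z0(2,3) Bad] by blast
  have "lin_indep_fm (PiE {1..r} (\<lambda>_. J)) (window_prod M v r) S"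
    using S S_good sets.sets_into_space[OF S(1)]
    by (intro lin_indep_fm_window_prod[OF N] indep window_in_space_PiM) auto
  then have "lin_indep_fm (PiE {1..r} (\<lambda>_. J))
      (\<lambda>js x. prod_family M r v js ((\<lambda>l\<in>{1..r}. x (M + l)), restrict x {1..M})) S"
    unfolding prod_family_eq_window_prod[OF r] .
  then show ?thesis
    by (rule lin_indep_fm_vimage) (use S_sub Y0(1) Z0(1) in blast)
qed

theorem lemma2:
  fixes M :: nat
    and J :: "'j set"
    and v :: "'j \<Rightarrow> real^'d \<Rightarrow> (nat \<Rightarrow> real^'d) \<Rightarrow> real"
  assumes M2: "M \<ge> 2"
    and b1: "\<And>j z y. j \<in> J \<Longrightarrow> y \<in> PiE {1..M} (\<lambda>_. UNIV) \<Longrightarrow> v j z y > 0"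
    and b4: "\<exists>Y. full_measure (tuple_lebesgue {1..M}) Y \<and>
               (\<forall>Y' Z. Y' \<subseteq> Y \<and> pos_measure (tuple_lebesgue {1..M}) Y' \<and> pos_measure lebesgue Z
                  \<longrightarrow> lin_indep_fm J (\<lambda>j (z, y). v j z y) (Z \<times> Y'))"
    and b5: "\<And>l \<beta> Z Y J0. 1 \<le> l \<Longrightarrow> l \<le> M \<Longrightarrow> \<beta> \<in> PiE {1..l} (\<lambda>_. UNIV) \<Longrightarrow>
               pos_measure lebesgue Z \<Longrightarrow> pos_measure (tuple_lebesgue {l+1..M}) Y \<Longrightarrow>
               finite J0 \<Longrightarrow> J0 \<subseteq> J \<Longrightarrow>
               \<not> lin_indep_fm J0 (\<lambda>j (z, y). v j z (merge_tuple M l y \<beta>)) (Z \<times> Y) \<Longrightarrow>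
               \<exists>j\<in>J0. \<exists>j'\<in>J0. j \<noteq> j' \<and>
                  (\<forall>z. \<forall>y\<in>PiE {l+1..M} (\<lambda>_. UNIV).
                      v j z (merge_tuple M l y \<beta>) = v j' z (merge_tuple M l y \<beta>))"
    and b6: "\<And>j z. j \<in> J \<Longrightarrow>
               continuous_map (product_topology (\<lambda>_. euclidean) {1..M}) euclidean (v j z)"
  shows "\<forall>r. 2 \<le> r \<and> r \<le> M \<longrightarrow>
           (\<exists>Y. full_measure (tuple_lebesgue {1..M}) Y \<and>
              (\<forall>Y' Zr. Y' \<subseteq> Y \<and> pos_measure (tuple_lebesgue {1..M}) Y' \<and>
                        pos_measure (tuple_lebesgue {1..r}) Zr
                 \<longrightarrow> lin_indep_fm (PiE {1..r} (\<lambda>_. J)) (prod_family M r v) (Zr \<times> Y')))"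
proof (intro allI impI exI conjI)
  fix r assume "2 \<le> r \<and> r \<le> M"
  then have r: "r \<le> Suc M"
    by simp
  have M: "1 \<le> M"
    using M2 by simp
  obtain Y where Y: "full_measure (tuple_lebesgue {1..M}) Y"
    and Y_indep: "\<And>Y' Z. Y' \<subseteq> Y \<Longrightarrow> pos_measure (tuple_lebesgue {1..M}) Y' \<Longrightarrow>
                    pos_measure lebesgue Z \<Longrightarrow> lin_indep_fm J (\<lambda>j (z, y). v j z y) (Z \<times> Y')"
    using b4 by blast
  have UNIV: "pos_measure lebesgue (UNIV :: (real^'d) set)"
    by (simp add: pos_measure_def)
  show "full_measure (tuple_lebesgue {1..M}) (space (tuple_lebesgue {1..M}))"
    by (simp add: full_measure_def)
  fix Y' Zr :: "(nat \<Rightarrow> real^'d) set"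
  assume "Y' \<subseteq> space (tuple_lebesgue {1..M}) \<and> pos_measure (tuple_lebesgue {1..M}) Y' \<and>
          pos_measure (tuple_lebesgue {1..r}) Zr"
  then have Y': "pos_measure (completion (PiM {1..M} (\<lambda>_. lborel))) Y'"
    and Zr: "pos_measure (completion (PiM {1..r} (\<lambda>_. lborel))) Zr"
    by (simp_all add: tuple_lebesgue_def)
  show "lin_indep_fm (PiE {1..r} (\<lambda>_. J)) (prod_family M r v) (Zr \<times> Y')"
  proof (rule lin_indep_fm_PiE_finite)
    fix J0 assume J0: "finite J0" "J0 \<subseteq> J"
    let ?Bad = "\<Union>j\<in>J0. \<Union>j'\<in>J0 - {j}. {\<beta> \<in> PiE {1..M} (\<lambda>_. UNIV). \<forall>z. v j z \<beta> = v j' z \<beta>}"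
    have indep: "lin_indep_fm J0 (\<lambda>j z. v j z \<beta>) Z"
      if "\<beta> \<in> space (PiM {1..M} (\<lambda>_. lborel))" "\<beta> \<notin> ?Bad"
        and "Z \<in> sets lborel" "0 < emeasure lborel Z" for \<beta> Z
      by (rule lin_indep_fm_off_coincidence_sets[OF _ M J0(2) that]) (rule b5)
    show "lin_indep_fm (PiE {1..r} (\<lambda>_. J0)) (prod_family M r v) (Zr \<times> Y')"
      using coincidence_sets_null[OF Y Y_indep[OF _ _ UNIV] b6 finite_atLeastAtMost J0] indep
      by (intro lin_indep_fm_prod_family[OF sigma_finite_lborel r _ _ Y' Zr])
  qed simp
qed

end
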